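(* The linear map $F:\mathcal{B}\to QSym$ defined on basis elements by $F(B)=F(P_B)$ (with $F(B_\emptyset)=1$) is a morphism of combinatorial Hopf algebras $(\mathcal{B},\zeta)\to(QSym,\zeta_Q)$; that is, $F$ is a morphism of graded Hopf algebras and $\zeta_Q\circ F=\zeta$. In particular $F(P_{B_1\sqcup B_2})=F(P_{B_1})F(P_{B_2})$ and $\Delta(F(P_B))=\sum_{I\subseteq V}F(P_{B|_I})\otimes F(P_{B/I})$.
   Context: A building set on a finite set $V$ is a collection $B$ of nonempty subsets of $V$ such that $\{v\}\in B$ for all $v\in V$ and such that $I,J\in B$, $I\cap J\neq\emptyset$ imply $I\cup J\in B$. It is connected if $V\in B$, and discrete if it consists only of the singletons. For $I\subseteq V$, the restriction is $B|_I=\{J\in B: J\subseteq I\}$ (a building set on $I$) and the contraction is $B/I=\{J\subseteq V\setminus I: J\neq\emptyset,\ J\in B\text{ or }J\cup I'\in B\text{ for some }I'\subseteq I\}$ (a building set on $V\setminus I$). The nestohedron of $B$ is the Minkowski sum $P_B=\sum_{I\in B}\mathrm{Conv}\{e_i: i\in I\}\subset\mathbb{R}^V$. For a convex polytope $Q\subset\mathbb{R}^V$, a function $f:V\to\mathbb{N}=\{1,2,\dots\}$ is $Q$-generic if the linear functional $x\mapsto\sum_{v\in V}f(v)x_v$ attains its maximum over $Q$ at a unique point. Set $F(Q)=\sum_{f\ Q\text{-generic}}\prod_{v\in V}x_{f(v)}$. For a composition $\alpha=(a_1,\dots,a_k)\models n$, $M_\alpha=\sum_{i_1<\dots<i_k}x_{i_1}^{a_1}\cdots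 x_{i_k}^{a_k}$, $M_{()}=1$. $\mathcal{B}$ is the Hopf algebra over a field $k$ with basis the isomorphism classes of building sets on finite sets, graded by ground set size, with product $B_1\cdot B_2=B_1\sqcup B_2$, coproduct $\Delta(B)=\sum_{I\subseteq V}B|_I\otimes B/I$, unit the empty building set $B_\emptyset$ and counit $\epsilon(B_\emptyset)=1$, $\epsilon(B)=0$ otherwise. The character $\zeta:\mathcal{B}\to k$ is $\zeta(B)=1$ if $B$ is discrete (including $B_\emptyset$) and $0$ otherwise. $QSym$ is the usual Hopf algebra of quasisymmetric functions (coproduct $\Delta M_{(a_1,\dots,a_k)}=\sum_{j=0}^k M_{(a_1,\dots,a_j)}\otimes M_{(a_{j+1},\dots,a_k)}$), and $\zeta_Q:QSym\to k$ is the character with $\zeta_Q(M_\alpha)=1$ if $\alpha=()$ or $\alpha$ has a single part, and $0$ otherwise. *)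

theory Defs
  imports Complex_Main "HOL-Library.FuncSet"
begin

definition building_set :: "'a set \<Rightarrow> 'a set set \<Rightarrow> bool" where
  "building_set V B \<longleftrightarrow>
     (\<forall>I\<in>B. I \<noteq> {} \<and> I \<subseteq> V) \<and>
     (\<forall>v\<in>V. {v} \<in> B) \<and>
     (\<forall>I\<in>B. \<forall>J\<in>B. I \<inter> J \<noteq> {} \<longrightarrow> I \<union> J \<in> B)"

definition discrete_bs :: "'a set \<Rightarrow> 'a set set \<Rightarrow> bool" where
  "discrete_bs V B \<longleftrightarrow> B = (\<lambda>v. {v}) ` V"

definition restr :: "'a set set \<Rightarrow> 'a set \<Rightarrow> 'a set set" where
  "restr B I = {J \<in> B. J \<subseteq> I}"

definition contr :: "'a set \<Rightarrow> 'a set set \<Rightarrow> 'a set \<Rightarrow> 'a set set" where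
  "contr V B I = {J. J \<subseteq> V - I \<and> J \<noteq> {} \<and> (J \<in> B \<or> (\<exists>I'\<subseteq>I. J \<union> I' \<in> B))}"

text \<open>Points of R^V are represented as functions 'a => real (supported on V).
  Conv{e_i : i in I} written out explicitly.\<close>
definition simplex :: "'a set \<Rightarrow> ('a \<Rightarrow> real) set" where
  "simplex I = {x. (\<forall>v. 0 \<le> x v) \<and> (\<forall>v. v \<notin> I \<longrightarrow> x v = 0) \<and> sum x I = 1}"

definition nestohedron :: "'a set set \<Rightarrow> ('a \<Rightarrow> real) set" where
  "nestohedron B = {(\<lambda>v. \<Sum>J\<in>B. y J v) | y. \<forall>J\<in>B. y J \<in> simplex J}"

definition generic :: "'a set \<Rightarrow> ('a \<Rightarrow> real) set \<Rightarrow> ('a \<Rightarrow> nat) \<Rightarrow> bool" where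
  "generic V Q f \<longleftrightarrow>
     (\<exists>!p. p \<in> Q \<and> (\<forall>q\<in>Q. (\<Sum>v\<in>V. real (f v) * q v) \<le> (\<Sum>v\<in>V. real (f v) * p v)))"

text \<open>A formal power series with integer (here: natural) coefficients is represented
  by its coefficient function on monomials; a monomial prod_i x_i^(m i) is an
  exponent vector m :: nat => nat with finite support (variables x_1, x_2, ...;
  the exponent of x_0 is irrelevant/zero).\<close>

definition fin_supp :: "(nat \<Rightarrow> nat) \<Rightarrow> bool" where
  "fin_supp m \<longleftrightarrow> finite {i. m i \<noteq> 0}"

definition Fpoly :: "'a set \<Rightarrow> ('a \<Rightarrow> real) set \<Rightarrow> (nat \<Rightarrow> nat) \<Rightarrow> nat" where
  "Fpoly V Q m = card {f \<in> V \<rightarrow>\<^sub>E {1..}. generic V Q f \<and> (\<forall>i. card {v\<in>V. f v = i} = m i)}"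

definition FB :: "'a set \<Rightarrow> 'a set set \<Rightarrow> (nat \<Rightarrow> nat) \<Rightarrow> nat" where
  "FB V B = Fpoly V (nestohedron B)"

definition flat :: "(nat \<Rightarrow> nat) \<Rightarrow> nat list" where
  "flat m = map m (sorted_list_of_set {i. m i \<noteq> 0})"

definition quasisymmetric :: "((nat \<Rightarrow> nat) \<Rightarrow> nat) \<Rightarrow> bool" where
  "quasisymmetric F \<longleftrightarrow>
     (\<forall>m m'. fin_supp m \<and> fin_supp m' \<and> m 0 = 0 \<and> m' 0 = 0 \<and> flat m = flat m' \<longrightarrow> F m = F m')"

definition homogeneous :: "nat \<Rightarrow> ((nat \<Rightarrow> nat) \<Rightarrow> nat) \<Rightarrow> bool" where
  "homogeneous n F \<longleftrightarrow>
     (\<forall>m. fin_supp m \<and> F m \<noteq> 0 \<longrightarrow> m 0 = 0 \<and> (\<Sum>i\<in>{i. m i \<noteq> 0}. m i) = n)"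

text \<open>Coefficient of M_alpha: the coefficient of x_1^(a_1) ... x_k^(a_k).\<close>
definition Mcoef :: "((nat \<Rightarrow> nat) \<Rightarrow> nat) \<Rightarrow> nat list \<Rightarrow> nat" where
  "Mcoef F \<alpha> = F (\<lambda>i. if 1 \<le> i \<and> i \<le> length \<alpha> then \<alpha> ! (i - 1) else 0)"

definition composition :: "nat list \<Rightarrow> bool" where
  "composition \<alpha> \<longleftrightarrow> 0 \<notin> set \<alpha>"

definition ps_mult :: "((nat \<Rightarrow> nat) \<Rightarrow> nat) \<Rightarrow> ((nat \<Rightarrow> nat) \<Rightarrow> nat) \<Rightarrow> (nat \<Rightarrow> nat) \<Rightarrow> nat" where
  "ps_mult F G m = (\<Sum>m1\<in>{m1. \<forall>i. m1 i \<le> m i}. F m1 * G (\<lambda>i. m i - m1 i))"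

text \<open>zeta_Q applied to a homogeneous quasisymmetric function of degree n:
  sum of the coefficients of M_() and of the M_(a) (only a <= n can occur).\<close>
definition zetaQ :: "nat \<Rightarrow> ((nat \<Rightarrow> nat) \<Rightarrow> nat) \<Rightarrow> nat" where
  "zetaQ n F = Mcoef F [] + (\<Sum>a\<in>{1..n}. Mcoef F [a])"

end

theory Submission
  imports Defs
begin

text \<open>
  A weight function f is P_B-generic iff f has a unique maximum on every member of B: a linear
  functional attains its maximum over the Minkowski sum P_B exactly at the sums of its maximizers
  on the simplices Conv{e_i : i \<in> I}, and the maximizer on a simplex is unique iff the maximum of
  f on I is attained at a single vertex. So the coefficient of a monomial in F(P_B) counts the
  functions f : V \<rightarrow> {1, 2, ...} with prescribed level sizes that have unique maxima on all
  I \<in> B. An order-preserving relabelling of values gives quasisymmetry, and only constant f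
  contribute to \<zeta>_Q, which have unique maxima exactly when B is discrete. For the product, f on
  V1 \<union> V2 has unique maxima on B1 \<union> B2 iff both restrictions do. For the coproduct, cut the
  values of f at k = length \<beta>: with I = {f \<le> k}, f has unique maxima on B iff f restricted to I
  has them on B|_I and f - k restricted to V - I has them on B/I, because the maximum of f on a
  member of B that meets V - I lies in V - I.
\<close>

section \<open>Linear functionals on nestohedra\<close>

definition std_basis :: "'a \<Rightarrow> 'a \<Rightarrow> real" where
  "std_basis a = (\<lambda>v. if v = a then 1 else 0)"

lemma simplex_finite: "y \<in> simplex J \<Longrightarrow> finite J"
  by (rule ccontr) (simp add: simplex_def)

lemma std_basis_in_simplex: "finite J \<Longrightarrow> a \<in> J \<Longrightarrow> std_basis a \<in> simplex J"
  by (simp add: simplex_def std_basis_def)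

lemma linear_std_basis:
  "finite J \<Longrightarrow> a \<in> J \<Longrightarrow> (\<Sum>v\<in>J. w v * std_basis a v) = w a"
  by (simp add: std_basis_def if_distrib cong: if_cong)

lemma simplex_linear_le:
  assumes y: "y \<in> simplex J" and w: "\<And>v. v \<in> J \<Longrightarrow> w v \<le> c"
  shows "(\<Sum>v\<in>J. w v * y v) \<le> c"
proof -
  have "(\<Sum>v\<in>J. w v * y v) \<le> (\<Sum>v\<in>J. c * y v)"
    using y w by (intro sum_mono mult_right_mono) (auto simp: simplex_def)
  also have "\<dots> = c" using y by (simp add: simplex_def flip: sum_distrib_left)
  finally show ?thesis .
qed

lemma simplex_linear_max_eq_std_basis:
  assumes y: "y \<in> simplex J" and a: "a \<in> J"
    and less: "\<And>b. b \<in> J \<Longrightarrow> b \<noteq> a \<Longrightarrow> w b < w a"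
    and max: "w a \<le> (\<Sum>v\<in>J. w v * y v)"
  shows "y = std_basis a"
proof -
  have J: "finite J" using y by (rule simplex_finite)
  have y0: "\<And>v. 0 \<le> y v" "\<And>v. v \<notin> J \<Longrightarrow> y v = 0" "sum y J = 1"
    using y by (auto simp: simplex_def)
  have nonneg: "0 \<le> (w a - w v) * y v" if "v \<in> J" for v
    using less[OF that] y0(1)[of v] by (cases "v = a") auto
  have "(\<Sum>v\<in>J. (w a - w v) * y v) = w a * sum y J - (\<Sum>v\<in>J. w v * y v)"
    by (simp add: left_diff_distrib sum_subtractf sum_distrib_left)
  also have "\<dots> \<le> 0" using y0(3) max by simp
  finally have "\<forall>v\<in>J. (w a - w v) * y v = 0"
    using sum_nonneg_eq_0_iff[OF J] nonneg by (meson antisym sum_nonneg)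
  then have zero: "y v = 0" if "v \<noteq> a" for v
    using that less y0(2) by (cases "v \<in> J") force+
  have "y a = 1"
    using y0(3) sum.remove[OF J a, of y] zero by (simp add: sum.neutral)
  then show ?thesis using zero by (auto simp: fun_eq_iff std_basis_def)
qed

lemma linear_simplex_subset:
  assumes "finite V" "J \<subseteq> V" "y \<in> simplex J"
  shows "(\<Sum>v\<in>V. w v * y v) = (\<Sum>v\<in>J. w v * y v)"
  using assms by (intro sum.mono_neutral_right) (auto simp: simplex_def)

lemma linear_nestohedron_point:
  assumes V: "finite V" and B: "B \<subseteq> Pow V" and y: "\<And>J. J \<in> B \<Longrightarrow> y J \<in> simplex J"
  shows "(\<Sum>v\<in>V. w v * (\<Sum>J\<in>B. y J v)) = (\<Sum>J\<in>B. \<Sum>v\<in>J. w v * y J v)"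
proof -
  have "(\<Sum>v\<in>V. w v * (\<Sum>J\<in>B. y J v)) = (\<Sum>J\<in>B. \<Sum>v\<in>V. w v * y J v)"
    by (simp add: sum_distrib_left sum.swap[of _ V])
  also have "\<dots> = (\<Sum>J\<in>B. \<Sum>v\<in>J. w v * y J v)"
    using V B y by (intro sum.cong refl linear_simplex_subset) auto
  finally show ?thesis .
qed

lemma nestohedron_linear_le:
  assumes V: "finite V" and B: "B \<subseteq> Pow V" and q: "q \<in> nestohedron B"
  shows "(\<Sum>v\<in>V. w v * q v) \<le> (\<Sum>J\<in>B. Max (w ` J))"
proof -
  obtain y where q_eq: "q = (\<lambda>v. \<Sum>J\<in>B. y J v)" and y: "\<And>J. J \<in> B \<Longrightarrow> y J \<in> simplex J"
    using q unfolding nestohedron_def by blast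
  have "(\<Sum>J\<in>B. \<Sum>v\<in>J. w v * y J v) \<le> (\<Sum>J\<in>B. Max (w ` J))"
  proof (intro sum_mono simplex_linear_le)
    fix J v assume "J \<in> B" "v \<in> J"
    then show "w v \<le> Max (w ` J)" using simplex_finite[OF y] by simp
  qed (use y in auto)
  then show ?thesis
    unfolding q_eq using linear_nestohedron_point[OF V B y] by simp
qed

definition vertex_sum :: "'a set set \<Rightarrow> ('a set \<Rightarrow> 'a) \<Rightarrow> 'a \<Rightarrow> real" where
  "vertex_sum B c = (\<lambda>v. \<Sum>J\<in>B. std_basis (c J) v)"

lemma vertex_sum_in_nestohedron:
  assumes "finite V" "B \<subseteq> Pow V" "\<And>J. J \<in> B \<Longrightarrow> c J \<in> J"
  shows "vertex_sum B c \<in> nestohedron B"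
proof -
  have "std_basis (c J) \<in> simplex J" if "J \<in> B" for J
    using that assms by (intro std_basis_in_simplex) (auto intro: finite_subset)
  then show ?thesis
    unfolding nestohedron_def vertex_sum_def by (intro CollectI exI[of _ "\<lambda>J. std_basis (c J)"]) auto
qed

lemma linear_vertex_sum:
  assumes V: "finite V" and B: "B \<subseteq> Pow V" and c: "\<And>J. J \<in> B \<Longrightarrow> c J \<in> J"
  shows "(\<Sum>v\<in>V. w v * vertex_sum B c v) = (\<Sum>J\<in>B. w (c J))"
proof -
  have "std_basis (c J) \<in> simplex J" if "J \<in> B" for J
    using that B V c by (intro std_basis_in_simplex) (auto intro: finite_subset)
  then show ?thesis
    unfolding vertex_sum_def using B V c
    by (subst linear_nestohedron_point) (auto intro!: sum.cong linear_std_basis intro: finite_subset)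
qed

lemma vertex_sum_fun_upd_neq:
  assumes "finite B" "J0 \<in> B" "b \<noteq> c J0"
  shows "vertex_sum B (c(J0 := b)) \<noteq> vertex_sum B c"
proof -
  have split: "vertex_sum B d (c J0) = std_basis (d J0) (c J0) + (\<Sum>J\<in>B - {J0}. std_basis (c J) (c J0))"
    if "\<And>J. J \<noteq> J0 \<Longrightarrow> d J = c J" for d
  proof -
    have "vertex_sum B d (c J0) = std_basis (d J0) (c J0) + (\<Sum>J\<in>B - {J0}. std_basis (d J) (c J0))"
      unfolding vertex_sum_def by (rule sum.remove[OF assms(1,2)])
    also have "(\<Sum>J\<in>B - {J0}. std_basis (d J) (c J0)) = (\<Sum>J\<in>B - {J0}. std_basis (c J) (c J0))"
      using that by (intro sum.cong) auto
    finally show ?thesis .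
  qed
  have "vertex_sum B (c(J0 := b)) (c J0) \<noteq> vertex_sum B c (c J0)"
    using split[of c] split[of "c(J0 := b)"] assms(3) by (simp add: std_basis_def)
  then show ?thesis by auto
qed

lemma nestohedron_maximizer_eq_vertex_sum:
  assumes V: "finite V" and B: "B \<subseteq> Pow V"
    and c: "\<And>J. J \<in> B \<Longrightarrow> c J \<in> J" "\<And>J b. J \<in> B \<Longrightarrow> b \<in> J \<Longrightarrow> b \<noteq> c J \<Longrightarrow> w b < w (c J)"
    and p: "p \<in> nestohedron B" and max: "(\<Sum>J\<in>B. w (c J)) \<le> (\<Sum>v\<in>V. w v * p v)"
  shows "p = vertex_sum B c"
proof -
  obtain y where p_eq: "p = (\<lambda>v. \<Sum>J\<in>B. y J v)" and y: "\<And>J. J \<in> B \<Longrightarrow> y J \<in> simplex J"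
    using p unfolding nestohedron_def by blast
  have finB: "finite B" using finite_subset[OF B] V by simp
  have le: "(\<Sum>v\<in>J. w v * y J v) \<le> w (c J)" if J: "J \<in> B" for J
  proof (rule simplex_linear_le[OF y[OF J]])
    show "w v \<le> w (c J)" if "v \<in> J" for v
      using c(2)[OF J that] by (cases "v = c J") auto
  qed
  have eq: "w (c J) \<le> (\<Sum>v\<in>J. w v * y J v)" if J: "J \<in> B" for J
  proof (rule ccontr)
    assume "\<not> ?thesis"
    then have "(\<Sum>J\<in>B. \<Sum>v\<in>J. w v * y J v) < (\<Sum>J\<in>B. w (c J))"
      using J le by (intro sum_strict_mono_ex1[OF finB]) (auto simp: not_le)
    moreover have "(\<Sum>v\<in>V. w v * p v) = (\<Sum>J\<in>B. \<Sum>v\<in>J. w v * y J v)"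
      unfolding p_eq by (rule linear_nestohedron_point[OF V B y])
    ultimately show False using max by simp
  qed
  have "y J = std_basis (c J)" if "J \<in> B" for J
    using that y c eq by (intro simplex_linear_max_eq_std_basis) auto
  then show ?thesis
    unfolding p_eq vertex_sum_def by (intro ext sum.cong) auto
qed

section \<open>Unique maxima and genericity\<close>

definition unique_max_on :: "'a set set \<Rightarrow> ('a \<Rightarrow> 'b::linorder) \<Rightarrow> bool" where
  "unique_max_on B f \<longleftrightarrow> (\<forall>J\<in>B. \<exists>a\<in>J. \<forall>b\<in>J. b \<noteq> a \<longrightarrow> f b < f a)"

lemma argmax_choice:
  fixes w :: "'a \<Rightarrow> 'b::linorder"
  assumes "\<And>J. J \<in> B \<Longrightarrow> finite J \<and> J \<noteq> {}"
  obtains c where "\<And>J. J \<in> B \<Longrightarrow> c J \<in> J \<and> w (c J) = Max (w ` J)"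
proof -
  have "\<exists>a. a \<in> J \<and> w a = Max (w ` J)" if "J \<in> B" for J
  proof -
    have "Max (w ` J) \<in> w ` J" using assms[OF that] by (intro Max_in) auto
    then obtain a where "a \<in> J" "Max (w ` J) = w a" by (rule imageE)
    then show ?thesis by auto
  qed
  then have "\<forall>J\<in>B. \<exists>a. a \<in> J \<and> w a = Max (w ` J)" by blast
  from bchoice[OF this] obtain c where "\<forall>J\<in>B. c J \<in> J \<and> w (c J) = Max (w ` J)" by blast
  then show ?thesis using that by blast
qed

lemma unique_max_on_argmax:
  fixes w :: "'a \<Rightarrow> 'b::linorder"
  assumes "unique_max_on B w" "J \<in> B" "finite J" "c \<in> J" "w c = Max (w ` J)" "b \<in> J" "b \<noteq> c"
  shows "w b < w c"
proof -
  obtain a where a: "a \<in> J" and a_max: "\<forall>b\<in>J. b \<noteq> a \<longrightarrow> w b < w a"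
    using assms(1,2) unfolding unique_max_on_def by blast
  have "a = c"
  proof (rule ccontr)
    assume "a \<noteq> c"
    then have "w c < w a" using a_max assms(4) by auto
    moreover have "w a \<le> w c" using assms(3,5) a by simp
    ultimately show False by simp
  qed
  then show ?thesis using a_max assms(6,7) by simp
qed

lemma non_unique_max_distinct_argmax_vertex_sums:
  fixes w :: "'a \<Rightarrow> 'b::linorder"
  assumes finB: "finite B" and finJ: "\<And>J. J \<in> B \<Longrightarrow> finite J \<and> J \<noteq> {}"
    and not_unique: "\<not> unique_max_on B w"
  obtains c c' where "\<And>J. J \<in> B \<Longrightarrow> c J \<in> J \<and> w (c J) = Max (w ` J)"
    "\<And>J. J \<in> B \<Longrightarrow> c' J \<in> J \<and> w (c' J) = Max (w ` J)" "vertex_sum B c' \<noteq> vertex_sum B c"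
proof -
  obtain c where c: "\<And>J. J \<in> B \<Longrightarrow> c J \<in> J \<and> w (c J) = Max (w ` J)"
    using argmax_choice[OF finJ] by blast
  obtain J0 where J0: "J0 \<in> B" and "\<not> (\<exists>a\<in>J0. \<forall>b\<in>J0. b \<noteq> a \<longrightarrow> w b < w a)"
    using not_unique unfolding unique_max_on_def by blast
  then have "\<not> (\<forall>b\<in>J0. b \<noteq> c J0 \<longrightarrow> w b < w (c J0))" using c[OF J0] by blast
  then obtain b where b: "b \<in> J0" "b \<noteq> c J0" "w (c J0) \<le> w b" by auto
  have "w b \<le> Max (w ` J0)" using finJ[OF J0] b(1) by simp
  then have "w b = Max (w ` J0)" using b(3) c[OF J0] by simp
  then have "J \<in> B \<Longrightarrow> (c(J0 := b)) J \<in> J \<and> w ((c(J0 := b)) J) = Max (w ` J)" for J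
    using c b(1) by simp
  then show ?thesis
    using that[OF c] vertex_sum_fun_upd_neq[where c = c, OF finB J0 b(2)] by blast
qed

lemma unique_maximizer_nestohedron_iff:
  fixes w :: "'a \<Rightarrow> real"
  assumes V: "finite V" and B: "B \<subseteq> Pow V - {{}}"
  shows "(\<exists>!p. p \<in> nestohedron B \<and> (\<forall>q\<in>nestohedron B. (\<Sum>v\<in>V. w v * q v) \<le> (\<Sum>v\<in>V. w v * p v)))
    \<longleftrightarrow> unique_max_on B w"
proof -
  define L where "L q = (\<Sum>v\<in>V. w v * q v)" for q
  define M where "M = (\<Sum>J\<in>B. Max (w ` J))"
  have BV: "B \<subseteq> Pow V" using B by blast
  have finB: "finite B" using finite_subset[OF BV] V by simp
  have finJ: "finite J \<and> J \<noteq> {}" if "J \<in> B" for J using that V B by (auto intro: finite_subset)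
  have vertex_max: "vertex_sum B d \<in> nestohedron B \<and> L (vertex_sum B d) = M"
    if "\<And>J. J \<in> B \<Longrightarrow> d J \<in> J \<and> w (d J) = Max (w ` J)" for d
    using that vertex_sum_in_nestohedron[OF V BV] linear_vertex_sum[OF V BV] unfolding L_def M_def by simp
  obtain c where c: "\<And>J. J \<in> B \<Longrightarrow> c J \<in> J \<and> w (c J) = Max (w ` J)"
    using argmax_choice[OF finJ] by blast
  have upper: "L q \<le> M" if "q \<in> nestohedron B" for q
    using nestohedron_linear_le[OF V BV that] unfolding L_def M_def .
  have "(\<forall>q\<in>nestohedron B. L q \<le> L p) \<longleftrightarrow> M \<le> L p" for p
    using upper vertex_max[OF c] order_trans by blast
  then have "(\<exists>!p. p \<in> nestohedron B \<and> (\<forall>q\<in>nestohedron B. L q \<le> L p)) \<longleftrightarrow>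
      (\<exists>!p. p \<in> nestohedron B \<and> M \<le> L p)"
    by simp
  also have "\<dots> \<longleftrightarrow> unique_max_on B w"
  proof
    assume uniq: "\<exists>!p. p \<in> nestohedron B \<and> M \<le> L p"
    have "p = q" if "p \<in> nestohedron B \<and> M \<le> L p" "q \<in> nestohedron B \<and> M \<le> L q" for p q
      using uniq that by blast
    then show "unique_max_on B w"
      using non_unique_max_distinct_argmax_vertex_sums[OF finB finJ] vertex_max by (metis order_refl)
  next
    assume u: "unique_max_on B w"
    show "\<exists>!p. p \<in> nestohedron B \<and> M \<le> L p"
    proof (rule ex1I[of _ "vertex_sum B c"])
      show "vertex_sum B c \<in> nestohedron B \<and> M \<le> L (vertex_sum B c)" using vertex_max[OF c] by simp
      show "p = vertex_sum B c" if p: "p \<in> nestohedron B \<and> M \<le> L p" for p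
      proof (rule nestohedron_maximizer_eq_vertex_sum[where c = c and w = w, OF V BV])
        show "w b < w (c J)" if "J \<in> B" "b \<in> J" "b \<noteq> c J" for J b
          using unique_max_on_argmax[OF u that(1)] finJ c that by blast
        have "(\<Sum>J\<in>B. w (c J)) = M" unfolding M_def using c by (intro sum.cong) auto
        then show "(\<Sum>J\<in>B. w (c J)) \<le> (\<Sum>v\<in>V. w v * p v)" using p unfolding L_def by simp
      qed (use p c in auto)
    qed
  qed
  finally show ?thesis unfolding L_def .
qed

lemma generic_nestohedron_iff:
  fixes f :: "'a \<Rightarrow> nat"
  assumes "finite V" "B \<subseteq> Pow V - {{}}"
  shows "generic V (nestohedron B) f \<longleftrightarrow> unique_max_on B f"
proof -
  have "unique_max_on B (\<lambda>v. real (f v)) \<longleftrightarrow> unique_max_on B f"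
    unfolding unique_max_on_def by simp
  then show ?thesis
    unfolding generic_def unique_maximizer_nestohedron_iff[OF assms] .
qed

lemma unique_max_on_cong:
  "(\<And>J v. J \<in> B \<Longrightarrow> v \<in> J \<Longrightarrow> f v = g v) \<Longrightarrow> unique_max_on B f \<longleftrightarrow> unique_max_on B g"
  unfolding unique_max_on_def by (intro ball_cong refl bex_cong) auto

lemma unique_max_on_subset: "unique_max_on B f \<Longrightarrow> B' \<subseteq> B \<Longrightarrow> unique_max_on B' f"
  unfolding unique_max_on_def by blast

lemma unique_max_on_Un: "unique_max_on (B1 \<union> B2) f \<longleftrightarrow> unique_max_on B1 f \<and> unique_max_on B2 f"
  unfolding unique_max_on_def by blast

lemma unique_max_on_const_iff: "unique_max_on B (\<lambda>_. c) \<longleftrightarrow> (\<forall>J\<in>B. \<exists>a. J = {a})"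
  unfolding unique_max_on_def by (intro ball_cong refl) auto

lemma unique_max_on_comp_strict_mono:
  assumes "strict_mono_on S \<phi>" "\<And>J v. J \<in> B \<Longrightarrow> v \<in> J \<Longrightarrow> f v \<in> S"
  shows "unique_max_on B (\<lambda>v. \<phi> (f v)) \<longleftrightarrow> unique_max_on B f"
  unfolding unique_max_on_def using assms
  by (intro ball_cong refl bex_cong) (auto simp: strict_mono_on_less)

lemma unique_max_on_contr:
  fixes f :: "'a \<Rightarrow> nat"
  assumes max: "unique_max_on B f" and low: "\<forall>v\<in>I. f v \<le> k" and high: "\<forall>v\<in>V - I. k < f v"
  shows "unique_max_on (contr V B I) (\<lambda>v. f v - k)"
  unfolding unique_max_on_def
proof
  fix J' assume "J' \<in> contr V B I"
  then have J': "J' \<subseteq> V - I" "J' \<noteq> {}" and "J' \<in> B \<or> (\<exists>I'\<subseteq>I. J' \<union> I' \<in> B)"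
    unfolding contr_def by auto
  then obtain J where J: "J \<in> B" "J' \<subseteq> J" "J - J' \<subseteq> I" by blast
  obtain a where a: "a \<in> J" "\<forall>b\<in>J. b \<noteq> a \<longrightarrow> f b < f a"
    using max J(1) unfolding unique_max_on_def by blast
  obtain w where w: "w \<in> J'" using J'(2) by blast
  have "a \<in> J'"
  proof (rule ccontr)
    assume "a \<notin> J'"
    then have "f a \<le> k" "f w < f a" using a J w low by auto
    moreover have "k < f w" using w J' high by auto
    ultimately show False by simp
  qed
  moreover have "f b - k < f a - k" if "b \<in> J'" "b \<noteq> a" for b
  proof -
    have "k < f b" using that(1) J' high by blast
    moreover have "f b < f a" using that a J by blast
    ultimately show ?thesis by arith
  qed
  ultimately show "\<exists>a\<in>J'. \<forall>b\<in>J'. b \<noteq> a \<longrightarrow> f b - k < f a - k" by blast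
qed

lemma unique_max_on_of_restr_contr:
  fixes f :: "'a \<Rightarrow> nat"
  assumes restr: "unique_max_on (restr B I) f" and contr: "unique_max_on (contr V B I) (\<lambda>v. f v - k)"
    and B: "B \<subseteq> Pow V" and low: "\<forall>v\<in>I. f v \<le> k" and high: "\<forall>v\<in>V - I. k < f v"
  shows "unique_max_on B f"
  unfolding unique_max_on_def
proof
  fix J assume J: "J \<in> B"
  show "\<exists>a\<in>J. \<forall>b\<in>J. b \<noteq> a \<longrightarrow> f b < f a"
  proof (cases "J \<subseteq> I")
    case True
    then show ?thesis using restr J unfolding unique_max_on_def restr_def by blast
  next
    case False
    have "(J - I) \<union> (J \<inter> I) \<in> B" using J by (simp add: Un_Diff_Int)
    then have "J - I \<in> contr V B I" using False J B unfolding contr_def by blast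
    then obtain a where a: "a \<in> J - I" "\<forall>b\<in>J - I. b \<noteq> a \<longrightarrow> f b - k < f a - k"
      using contr unfolding unique_max_on_def by blast
    have aV: "a \<in> V - I" using a J B by blast
    have "f b < f a" if "b \<in> J" "b \<noteq> a" for b
    proof (cases "b \<in> I")
      case True
      then have "f b \<le> k" using low by blast
      moreover have "k < f a" using high aV by blast
      ultimately show ?thesis by simp
    next
      case False
      then have "f b - k < f a - k" using that a by blast
      then show ?thesis by arith
    qed
    then show ?thesis using a by blast
  qed
qed

lemma unique_max_on_split_iff:
  fixes f :: "'a \<Rightarrow> nat"
  assumes "B \<subseteq> Pow V" "\<forall>v\<in>I. f v \<le> k" "\<forall>v\<in>V - I. k < f v"
  shows "unique_max_on B f \<longleftrightarrow>
    unique_max_on (restr B I) f \<and> unique_max_on (contr V B I) (\<lambda>v. f v - k)"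
  using assms unique_max_on_subset[of B f "restr B I"] unique_max_on_contr[of B f I k V]
    unique_max_on_of_restr_contr[of B I f V k]
  by (auto simp: restr_def)

lemma building_set_subset_Pow: "building_set V B \<Longrightarrow> B \<subseteq> Pow V - {{}}"
  unfolding building_set_def by blast

definition level_count :: "'a set \<Rightarrow> ('a \<Rightarrow> nat) \<Rightarrow> nat \<Rightarrow> nat" where
  "level_count V f i = card {v \<in> V. f v = i}"

definition generic_fns :: "'a set \<Rightarrow> 'a set set \<Rightarrow> (nat \<Rightarrow> nat) \<Rightarrow> ('a \<Rightarrow> nat) set" where
  "generic_fns V B m = {f \<in> V \<rightarrow>\<^sub>E {1..}. unique_max_on B f \<and> level_count V f = m}"

lemma FB_eq_card_generic_fns:
  assumes "finite V" "B \<subseteq> Pow V - {{}}"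
  shows "FB V B m = card (generic_fns V B m)"
  unfolding FB_def Fpoly_def generic_fns_def level_count_def generic_nestohedron_iff[OF assms]
  by (simp add: fun_eq_iff)

lemma card_eq_sum_card_fibres:
  assumes "finite A" "finite C" "g ` A \<subseteq> C"
  shows "card A = (\<Sum>c\<in>C. card {a \<in> A. g a = c})"
  using sum.group[OF assms, of "\<lambda>_. 1::nat"] by simp

lemma sum_level_count: "finite V \<Longrightarrow> (\<Sum>i\<in>f ` V. level_count V f i) = card V"
  unfolding level_count_def by (rule card_eq_sum_card_fibres[symmetric]) auto

lemma level_count_eq_0_iff: "finite V \<Longrightarrow> level_count V f i = 0 \<longleftrightarrow> i \<notin> f ` V"
  unfolding level_count_def by (subst card_0_eq) auto

lemma generic_fns_support:
  assumes "finite V" "f \<in> generic_fns V B m"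
  shows "{i. m i \<noteq> 0} = f ` V"
  using assms level_count_eq_0_iff[OF assms(1), of f] unfolding generic_fns_def by auto

lemma generic_fns_value:
  assumes "finite V" "f \<in> generic_fns V B m" "v \<in> V"
  shows "m (f v) \<noteq> 0"
  using generic_fns_support[OF assms(1,2)] assms(3) by auto

lemma finite_generic_fns:
  assumes V: "finite V"
  shows "finite (generic_fns V B m)"
proof (cases "finite {i. m i \<noteq> 0}")
  case True
  have "generic_fns V B m \<subseteq> V \<rightarrow>\<^sub>E {i. m i \<noteq> 0}"
    using generic_fns_value[OF V] by (auto simp: generic_fns_def PiE_iff extensional_def)
  then show ?thesis using finite_PiE[OF V True] finite_subset by blast
next
  case False
  have "generic_fns V B m = {}"
  proof (rule equals0I)
    fix f assume "f \<in> generic_fns V B m"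
    then have "finite {i. m i \<noteq> 0}" using generic_fns_support[OF V] V by simp
    with False show False ..
  qed
  then show ?thesis by simp
qed

lemma generic_fns_empty: "generic_fns {} {} m = (if m = (\<lambda>_. 0) then {\<lambda>_. undefined} else {})"
  by (auto simp: generic_fns_def unique_max_on_def level_count_def fun_eq_iff)

lemma generic_fns_level_0:
  assumes "f \<in> generic_fns V B m"
  shows "m 0 = 0"
proof -
  have "{v \<in> V. f v = 0} = {}" using assms by (auto simp: generic_fns_def PiE_iff)
  then have "level_count V f 0 = 0" unfolding level_count_def by (simp only: card.empty)
  then show ?thesis using assms by (simp add: generic_fns_def)
qed

lemma homogeneous_card:
  assumes V: "finite V" and B: "B \<subseteq> Pow V - {{}}"
  shows "homogeneous (card V) (FB V B)"
  unfolding homogeneous_def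
proof (intro allI impI)
  fix m assume "fin_supp m \<and> FB V B m \<noteq> 0"
  then obtain f where f: "f \<in> generic_fns V B m"
    using FB_eq_card_generic_fns[OF V B] by fastforce
  have "(\<Sum>i\<in>{i. m i \<noteq> 0}. m i) = (\<Sum>i\<in>f ` V. level_count V f i)"
    using generic_fns_support[OF V f] f unfolding generic_fns_def by simp
  then show "m 0 = 0 \<and> (\<Sum>i\<in>{i. m i \<noteq> 0}. m i) = card V"
    using generic_fns_level_0[OF f] sum_level_count[OF V] by simp
qed

lemma level_count_restrict: "level_count V (restrict f V) = level_count V f"
  unfolding level_count_def by (intro ext arg_cong[where f = card]) auto

lemma level_count_Un:
  assumes "finite V1" "finite V2" "V1 \<inter> V2 = {}"
  shows "level_count (V1 \<union> V2) f i = level_count V1 f i + level_count V2 f i"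
proof -
  have "{v \<in> V1 \<union> V2. f v = i} = {v \<in> V1. f v = i} \<union> {v \<in> V2. f v = i}" by auto
  then show ?thesis using assms unfolding level_count_def by (simp add: card_Un_disjoint disjoint_iff)
qed

section \<open>The character\<close>

lemma discrete_bs_iff_singletons:
  assumes "building_set V B"
  shows "discrete_bs V B \<longleftrightarrow> (\<forall>J\<in>B. \<exists>a. J = {a})"
proof
  assume "\<forall>J\<in>B. \<exists>a. J = {a}"
  moreover have "B \<subseteq> Pow V" "(\<lambda>v. {v}) ` V \<subseteq> B" using assms unfolding building_set_def by auto
  ultimately show "discrete_bs V B" unfolding discrete_bs_def by fastforce
qed (auto simp: discrete_bs_def)

lemma generic_fns_single_level:
  assumes V: "finite V" and B: "B \<subseteq> Pow V"
  shows "generic_fns V B (\<lambda>i. if i = 1 then a else 0) =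
    (if a = card V \<and> (\<forall>J\<in>B. \<exists>x. J = {x}) then {restrict (\<lambda>_. 1) V} else {})"
proof -
  let ?m = "\<lambda>i::nat. if i = 1 then a else 0" and ?one = "restrict (\<lambda>_. 1::nat) V"
  have one: "f = ?one" if "f \<in> generic_fns V B ?m" for f
  proof -
    have "f v = 1" if "v \<in> V" for v
      using generic_fns_value[OF V \<open>f \<in> generic_fns V B ?m\<close> that] by (simp split: if_splits)
    then show ?thesis using that by (auto simp: generic_fns_def PiE_iff extensional_def)
  qed
  have "level_count V ?one = (\<lambda>i. if i = 1 then card V else 0)"
    by (auto simp: level_count_def fun_eq_iff)
  moreover have "unique_max_on B ?one \<longleftrightarrow> unique_max_on B (\<lambda>_. 1::nat)"
    using B by (intro unique_max_on_cong) auto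
  ultimately have "?one \<in> generic_fns V B ?m \<longleftrightarrow> a = card V \<and> (\<forall>J\<in>B. \<exists>x. J = {x})"
    by (auto simp: generic_fns_def unique_max_on_const_iff fun_eq_iff split: if_splits)
  then show ?thesis using one by auto
qed

lemma zetaQ_eq_sum_single_levels:
  "zetaQ n F = (\<Sum>a\<in>{0..n}. F (\<lambda>i. if i = 1 then a else 0))"
proof -
  have "Mcoef F [] = F (\<lambda>i. if i = 1 then 0 else 0)" "\<And>a. Mcoef F [a] = F (\<lambda>i. if i = 1 then a else 0)"
    unfolding Mcoef_def by (auto intro!: arg_cong[where f = F])
  then show ?thesis
    unfolding zetaQ_def by (subst sum.atLeast_Suc_atMost) simp_all
qed

lemma zetaQ_FB:
  assumes V: "finite V" and B: "building_set V B"
  shows "zetaQ (card V) (FB V B) = (if discrete_bs V B then 1 else 0)"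
proof -
  have BV: "B \<subseteq> Pow V - {{}}" using B by (rule building_set_subset_Pow)
  then have "B \<subseteq> Pow V" by blast
  have "zetaQ (card V) (FB V B) =
      (\<Sum>a\<in>{0..card V}. if a = card V \<and> (\<forall>J\<in>B. \<exists>x. J = {x}) then 1 else 0)"
    unfolding zetaQ_eq_sum_single_levels FB_eq_card_generic_fns[OF V BV]
    unfolding generic_fns_single_level[OF V \<open>B \<subseteq> Pow V\<close>] by (intro sum.cong refl) simp
  also have "\<dots> = (if discrete_bs V B then 1 else 0)"
    by (simp add: discrete_bs_iff_singletons[OF B] sum.delta')
  finally show ?thesis .
qed

section \<open>Quasisymmetry\<close>

lemma strict_mono_on_inv_into:
  fixes f :: "'a::linorder \<Rightarrow> 'b::linorder"
  assumes "strict_mono_on A f"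
  shows "strict_mono_on (f ` A) (inv_into A f)"
proof (rule strict_mono_onI)
  fix x y assume "x \<in> f ` A" "y \<in> f ` A" "x < y"
  then obtain a b where "a \<in> A" "b \<in> A" "x = f a" "y = f b" "f a < f b" by blast
  then show "inv_into A f x < inv_into A f y"
    using strict_mono_on_less[OF assms] strict_mono_on_imp_inj_on[OF assms] by simp
qed

lemma relabel_in_generic_fns:
  assumes V: "finite V" and B: "B \<subseteq> Pow V"
    and bij: "bij_betw \<phi> {i. m i \<noteq> 0} {i. m' i \<noteq> 0}"
    and mono: "strict_mono_on {i. m i \<noteq> 0} \<phi>"
    and m': "\<And>i. m i \<noteq> 0 \<Longrightarrow> m' (\<phi> i) = m i" and m'0: "m' 0 = 0"
    and f: "f \<in> generic_fns V B m"
  shows "restrict (\<lambda>v. \<phi> (f v)) V \<in> generic_fns V B m'"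
proof -
  let ?S = "{i. m i \<noteq> 0}" and ?S' = "{i. m' i \<noteq> 0}" and ?g = "restrict (\<lambda>v. \<phi> (f v)) V"
  have inj: "inj_on \<phi> ?S" and img: "\<phi> ` ?S = ?S'" using bij unfolding bij_betw_def by auto
  have fS: "f v \<in> ?S" if "v \<in> V" for v using generic_fns_value[OF V f that] by simp
  then have fS': "\<phi> (f v) \<in> ?S'" if "v \<in> V" for v using img that by blast
  have "1 \<le> \<phi> (f v)" if "v \<in> V" for v using fS'[OF that] m'0 by (cases "\<phi> (f v)") auto
  then have "?g \<in> V \<rightarrow>\<^sub>E {1..}" by (simp add: restrict_PiE_iff)
  moreover have "unique_max_on B ?g \<longleftrightarrow> unique_max_on B (\<lambda>v. \<phi> (f v))"
    using B by (intro unique_max_on_cong) auto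
  moreover have "\<dots> \<longleftrightarrow> unique_max_on B f"
    using B fS by (intro unique_max_on_comp_strict_mono[OF mono]) auto
  moreover have "level_count V ?g j = m' j" for j
  proof (cases "j \<in> ?S'")
    case True
    then obtain i where i: "i \<in> ?S" "j = \<phi> i" using img by blast
    then have "{v \<in> V. ?g v = j} = {v \<in> V. f v = i}"
      using inj fS unfolding inj_on_def by auto
    then show ?thesis
      using f i m' unfolding generic_fns_def level_count_def by auto
  next
    case False
    then have empty: "{v \<in> V. ?g v = j} = {}" using fS' by fastforce
    show ?thesis using False unfolding level_count_def empty by simp
  qed
  ultimately show ?thesis using f unfolding generic_fns_def by auto
qed

lemma card_generic_fns_relabel_le:
  assumes V: "finite V" and B: "B \<subseteq> Pow V"
    and bij: "bij_betw \<phi> {i. m i \<noteq> 0} {i. m' i \<noteq> 0}"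
    and "strict_mono_on {i. m i \<noteq> 0} \<phi>" "\<And>i. m i \<noteq> 0 \<Longrightarrow> m' (\<phi> i) = m i" "m' 0 = 0"
  shows "card (generic_fns V B m) \<le> card (generic_fns V B m')"
proof (rule card_inj_on_le[OF _ _ finite_generic_fns[OF V]])
  show "(\<lambda>f. restrict (\<lambda>v. \<phi> (f v)) V) ` generic_fns V B m \<subseteq> generic_fns V B m'"
    using relabel_in_generic_fns[OF assms] by blast
  show "inj_on (\<lambda>f. restrict (\<lambda>v. \<phi> (f v)) V) (generic_fns V B m)"
  proof (rule inj_onI)
    fix f g assume f: "f \<in> generic_fns V B m" and g: "g \<in> generic_fns V B m"
      and eq: "restrict (\<lambda>v. \<phi> (f v)) V = restrict (\<lambda>v. \<phi> (g v)) V"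
    show "f = g"
    proof (rule PiE_ext)
      show "f \<in> V \<rightarrow>\<^sub>E {1..}" "g \<in> V \<rightarrow>\<^sub>E {1..}" using f g unfolding generic_fns_def by auto
      fix v assume v: "v \<in> V"
      have "\<phi> (f v) = \<phi> (g v)" using fun_cong[OF eq, of v] v by simp
      then show "f v = g v"
        using bij generic_fns_value[OF V f v] generic_fns_value[OF V g v]
        unfolding bij_betw_def inj_on_def by blast
    qed
  qed
qed

lemma order_iso_of_flat_eq:
  assumes fin: "fin_supp m" "fin_supp m'" and flat: "flat m = flat m'"
  obtains \<phi> where "bij_betw \<phi> {i. m i \<noteq> 0} {i. m' i \<noteq> 0}" "strict_mono_on {i. m i \<noteq> 0} \<phi>"
    "\<And>i. m i \<noteq> 0 \<Longrightarrow> m' (\<phi> i) = m i"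
proof -
  let ?S = "{i. m i \<noteq> 0}" and ?S' = "{i. m' i \<noteq> 0}"
  define xs where "xs = sorted_list_of_set ?S"
  define xs' where "xs' = sorted_list_of_set ?S'"
  have S: "finite ?S" "finite ?S'" using fin unfolding fin_supp_def by auto
  have map_eq: "map m xs = map m' xs'" using flat unfolding flat_def xs_def xs'_def by simp
  define n where "n = length xs"
  have len': "length xs' = n" using arg_cong[OF map_eq, of length] unfolding n_def by simp
  have bij_xs: "bij_betw (nth xs) {..<n} ?S" and bij_xs': "bij_betw (nth xs') {..<n} ?S'"
    using S len' unfolding xs_def xs'_def n_def by (auto intro: bij_betw_nth)
  have mono_xs: "strict_mono_on {..<n} (nth xs)" and mono_xs': "strict_mono_on {..<n} (nth xs')"
    using sorted_wrt_nth_less[of "(<)" xs] sorted_wrt_nth_less[of "(<)" xs'] len'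
    unfolding xs_def xs'_def n_def by (auto intro!: strict_mono_onI)
  define \<psi> where "\<psi> = inv_into {..<n} (nth xs)"
  have bij_\<psi>: "bij_betw \<psi> ?S {..<n}" unfolding \<psi>_def by (rule bij_betw_inv_into[OF bij_xs])
  have \<psi>: "\<psi> i < n" "xs ! \<psi> i = i" if "i \<in> ?S" for i
    using bij_betw_inv_into_right[OF bij_xs that] bij_betw_apply[OF bij_\<psi> that] unfolding \<psi>_def by auto
  have "bij_betw (nth xs' \<circ> \<psi>) ?S ?S'" by (rule bij_betw_trans[OF bij_\<psi> bij_xs'])
  moreover have "strict_mono_on ?S (nth xs' \<circ> \<psi>)"
  proof (rule strict_mono_onI)
    fix i j assume "i \<in> ?S" "j \<in> ?S" "i < j"
    then have "\<psi> i < \<psi> j"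
      using strict_mono_on_inv_into[OF mono_xs] bij_xs unfolding \<psi>_def bij_betw_def
      by (simp add: strict_mono_on_less)
    then show "(nth xs' \<circ> \<psi>) i < (nth xs' \<circ> \<psi>) j"
      using mono_xs' \<psi>(1) \<open>i \<in> ?S\<close> \<open>j \<in> ?S\<close> by (simp add: strict_mono_on_less)
  qed
  moreover have "m' ((nth xs' \<circ> \<psi>) i) = m i" if "m i \<noteq> 0" for i
  proof -
    have "m' ((nth xs' \<circ> \<psi>) i) = map m' xs' ! \<psi> i" using \<psi>(1)[of i] that len' by simp
    also have "\<dots> = map m xs ! \<psi> i" by (simp only: map_eq)
    also have "\<dots> = m i" using \<psi>[of i] that unfolding n_def by simp
    finally show ?thesis .
  qed
  ultimately show ?thesis using that by blast
qed

lemma quasisymmetric_FB: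
  assumes V: "finite V" and B: "B \<subseteq> Pow V - {{}}"
  shows "quasisymmetric (FB V B)"
  unfolding quasisymmetric_def
proof (intro allI impI)
  fix m m' assume h: "fin_supp m \<and> fin_supp m' \<and> m 0 = 0 \<and> m' 0 = 0 \<and> flat m = flat m'"
  have BP: "B \<subseteq> Pow V" using B by blast
  obtain \<phi> where "bij_betw \<phi> {i. m i \<noteq> 0} {i. m' i \<noteq> 0}" "strict_mono_on {i. m i \<noteq> 0} \<phi>"
    "\<And>i. m i \<noteq> 0 \<Longrightarrow> m' (\<phi> i) = m i"
    by (rule order_iso_of_flat_eq[of m m']) (use h in auto)
  then have "card (generic_fns V B m) \<le> card (generic_fns V B m')"
    using h by (intro card_generic_fns_relabel_le[OF V BP]) auto
  moreover obtain \<phi>' where "bij_betw \<phi>' {i. m' i \<noteq> 0} {i. m i \<noteq> 0}" "strict_mono_on {i. m' i \<noteq> 0} \<phi>'"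
    "\<And>i. m' i \<noteq> 0 \<Longrightarrow> m (\<phi>' i) = m' i"
    by (rule order_iso_of_flat_eq[of m' m]) (use h in auto)
  then have "card (generic_fns V B m') \<le> card (generic_fns V B m)"
    using h by (intro card_generic_fns_relabel_le[OF V BP]) auto
  ultimately show "FB V B m = FB V B m'"
    unfolding FB_eq_card_generic_fns[OF V B] by simp
qed

lemma bij_betw_Collect:
  assumes "bij_betw f A B" "\<And>x. x \<in> A \<Longrightarrow> P x \<longleftrightarrow> Q (f x)"
  shows "bij_betw f {x \<in> A. P x} {y \<in> B. Q y}"
proof -
  have "inj_on f {x \<in> A. P x}" using assms(1) unfolding bij_betw_def by (auto intro: inj_on_subset)
  moreover have "f ` {x \<in> A. P x} = {y \<in> B. Q y}"
    using assms unfolding bij_betw_def by blast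
  ultimately show ?thesis unfolding bij_betw_def ..
qed

lemma bij_betw_split_shift:
  fixes k :: nat
  assumes "I \<subseteq> V"
  shows "bij_betw (\<lambda>f. (restrict f I, restrict (\<lambda>v. f v - k) (V - I)))
    {f \<in> extensional V. \<forall>v\<in>V - I. k < f v}
    (extensional I \<times> {h \<in> extensional (V - I). \<forall>v\<in>V - I. 0 < h v})"
proof (rule bij_betwI[where g = "\<lambda>(g, h) v. if v \<in> I then g v else if v \<in> V then h v + k else undefined"])
  show "(\<lambda>f. (restrict f I, restrict (\<lambda>v. f v - k) (V - I))) \<in>
      {f \<in> extensional V. \<forall>v\<in>V - I. k < f v} \<rightarrow> extensional I \<times> {h \<in> extensional (V - I). \<forall>v\<in>V - I. 0 < h v}"
    by auto
  show "(\<lambda>(g, h) v. if v \<in> I then g v else if v \<in> V then h v + k else undefined) \<in>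
      extensional I \<times> {h \<in> extensional (V - I). \<forall>v\<in>V - I. 0 < h v} \<rightarrow> {f \<in> extensional V. \<forall>v\<in>V - I. k < f v}"
    using assms by (auto simp: extensional_def)
  show "(\<lambda>(g, h) v. if v \<in> I then g v else if v \<in> V then h v + k else undefined)
      (restrict f I, restrict (\<lambda>v. f v - k) (V - I)) = f"
    if "f \<in> {f \<in> extensional V. \<forall>v\<in>V - I. k < f v}" for f
    using that assms by (auto simp: fun_eq_iff extensional_def less_imp_le)
qed (auto simp: fun_eq_iff extensional_def)

lemma card_Collect_split_shift:
  fixes k :: nat
  assumes I: "I \<subseteq> V"
    and P: "\<And>f. P f \<Longrightarrow> f \<in> extensional V \<and> (\<forall>v\<in>V - I. k < f v)"
    and P_iff: "\<And>f. f \<in> extensional V \<Longrightarrow> \<forall>v\<in>V - I. k < f v \<Longrightarrow>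
      P f \<longleftrightarrow> restrict f I \<in> S1 \<and> restrict (\<lambda>v. f v - k) (V - I) \<in> S2"
    and S1: "S1 \<subseteq> extensional I" and S2: "S2 \<subseteq> {h \<in> extensional (V - I). \<forall>v\<in>V - I. 0 < h v}"
  shows "card (Collect P) = card S1 * card S2"
proof -
  have "Collect P = {f \<in> {f \<in> extensional V. \<forall>v\<in>V - I. k < f v}. P f}" using P by blast
  moreover have "S1 \<times> S2 = {p \<in> extensional I \<times> {h \<in> extensional (V - I). \<forall>v\<in>V - I. 0 < h v}.
      fst p \<in> S1 \<and> snd p \<in> S2}"
    using S1 S2 by auto
  ultimately have "bij_betw (\<lambda>f. (restrict f I, restrict (\<lambda>v. f v - k) (V - I))) (Collect P) (S1 \<times> S2)"
    using P_iff by (simp only:) (intro bij_betw_Collect[OF bij_betw_split_shift[OF I]], simp)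
  then show ?thesis by (simp add: bij_betw_same_card card_cartesian_product)
qed

section \<open>Product\<close>

lemma generic_fns_Un_iff:
  assumes V: "finite V1" "finite V2" "V1 \<inter> V2 = {}" and B: "B1 \<subseteq> Pow V1" "B2 \<subseteq> Pow V2"
    and m1: "\<And>i. m1 i \<le> m i" and f: "f \<in> extensional (V1 \<union> V2)"
  shows "f \<in> generic_fns (V1 \<union> V2) (B1 \<union> B2) m \<and> level_count V1 f = m1 \<longleftrightarrow>
    restrict f V1 \<in> generic_fns V1 B1 m1 \<and> restrict f V2 \<in> generic_fns V2 B2 (\<lambda>i. m i - m1 i)"
proof -
  have "f \<in> (V1 \<union> V2) \<rightarrow>\<^sub>E {1..} \<longleftrightarrow> restrict f V1 \<in> V1 \<rightarrow>\<^sub>E {1..} \<and> restrict f V2 \<in> V2 \<rightarrow>\<^sub>E {1..}"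
    using f by (auto simp: PiE_iff restrict_PiE_iff)
  moreover have "unique_max_on (B1 \<union> B2) f \<longleftrightarrow>
      unique_max_on B1 (restrict f V1) \<and> unique_max_on B2 (restrict f V2)"
    unfolding unique_max_on_Un using B by (intro conj_cong unique_max_on_cong) auto
  moreover have "level_count (V1 \<union> V2) f = m \<and> level_count V1 f = m1 \<longleftrightarrow>
      level_count V1 f = m1 \<and> level_count V2 f = (\<lambda>i. m i - m1 i)"
  proof (cases "level_count V1 f = m1")
    case True
    have "level_count (V1 \<union> V2) f i = m i \<longleftrightarrow> level_count V2 f i = m i - m1 i" for i
      using level_count_Un[OF V, of f i] m1[of i] True by auto
    then show ?thesis using True by (simp add: fun_eq_iff)
  qed simp
  ultimately show ?thesis
    unfolding generic_fns_def mem_Collect_eq level_count_restrict by blast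
qed

lemma card_generic_fns_Un_fibre:
  assumes V: "finite V1" "finite V2" "V1 \<inter> V2 = {}" and B: "B1 \<subseteq> Pow V1" "B2 \<subseteq> Pow V2"
    and m1: "\<And>i. m1 i \<le> m i"
  shows "card {f \<in> generic_fns (V1 \<union> V2) (B1 \<union> B2) m. level_count V1 f = m1} =
    card (generic_fns V1 B1 m1) * card (generic_fns V2 B2 (\<lambda>i. m i - m1 i))"
proof -
  have V2_eq: "V1 \<union> V2 - V1 = V2" using V(3) by blast
  \<comment> \<open>the product is the level split at k = 0\<close>
  show ?thesis
  proof (rule card_Collect_split_shift[where I = V1 and V = "V1 \<union> V2" and k = 0, unfolded V2_eq diff_zero])
    show "\<And>f. f \<in> extensional (V1 \<union> V2) \<Longrightarrow> \<forall>v\<in>V2. 0 < f v \<Longrightarrow>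
      f \<in> generic_fns (V1 \<union> V2) (B1 \<union> B2) m \<and> level_count V1 f = m1 \<longleftrightarrow>
      restrict f V1 \<in> generic_fns V1 B1 m1 \<and> restrict f V2 \<in> generic_fns V2 B2 (\<lambda>i. m i - m1 i)"
      by (rule generic_fns_Un_iff[OF V B m1])
  qed (auto simp: generic_fns_def PiE_iff Suc_le_eq)
qed

lemma finite_pointwise_le:
  assumes "fin_supp m"
  shows "finite {m1. \<forall>i. m1 i \<le> (m i :: nat)}"
proof -
  let ?S = "{i. m i \<noteq> 0}"
  have "{m1. \<forall>i. m1 i \<le> m i} \<subseteq> {g. \<forall>x. (x \<in> ?S \<longrightarrow> g x \<in> {..sum m ?S}) \<and> (x \<notin> ?S \<longrightarrow> g x = 0)}"
  proof (intro subsetI CollectI allI conjI impI)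
    fix g x assume g: "g \<in> {m1. \<forall>i. m1 i \<le> m i}"
    show "g x \<in> {..sum m ?S}" if "x \<in> ?S"
    proof -
      have "m x \<le> sum m ?S" using that assms unfolding fin_supp_def by (intro member_le_sum) auto
      moreover have "g x \<le> m x" using g by simp
      ultimately show ?thesis by simp
    qed
    show "g x = 0" if "x \<notin> ?S" using g[simplified, rule_format, of x] that by simp
  qed
  moreover have "finite ?S" using assms unfolding fin_supp_def .
  ultimately show ?thesis
    using finite_subset finite_set_of_finite_funs[of ?S "{..sum m ?S}" 0] by simp
qed

lemma FB_Un:
  assumes V: "finite V1" "finite V2" "V1 \<inter> V2 = {}"
    and B: "B1 \<subseteq> Pow V1 - {{}}" "B2 \<subseteq> Pow V2 - {{}}" and m: "fin_supp m"
  shows "FB (V1 \<union> V2) (B1 \<union> B2) m = ps_mult (FB V1 B1) (FB V2 B2) m"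
proof -
  let ?G = "generic_fns (V1 \<union> V2) (B1 \<union> B2) m"
  have BU: "B1 \<union> B2 \<subseteq> Pow (V1 \<union> V2) - {{}}" using B by blast
  have below: "level_count V1 f i \<le> m i" if "f \<in> ?G" for f i
  proof -
    have "level_count V1 f i \<le> level_count (V1 \<union> V2) f i" using level_count_Un[OF V] by simp
    then show ?thesis using that unfolding generic_fns_def by simp
  qed
  have "FB (V1 \<union> V2) (B1 \<union> B2) m = card ?G"
    using FB_eq_card_generic_fns[OF _ BU] V by simp
  also have "\<dots> = (\<Sum>m1\<in>{m1. \<forall>i. m1 i \<le> m i}. card {f \<in> ?G. level_count V1 f = m1})"
    using below V by (intro card_eq_sum_card_fibres finite_generic_fns finite_pointwise_le[OF m]) auto
  also have "\<dots> = ps_mult (FB V1 B1) (FB V2 B2) m"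
    unfolding ps_mult_def FB_eq_card_generic_fns[OF V(1) B(1)] FB_eq_card_generic_fns[OF V(2) B(2)]
    using B by (intro sum.cong refl card_generic_fns_Un_fibre[OF V]) auto
  finally show ?thesis .
qed

section \<open>Coproduct\<close>

definition levels_upto :: "nat \<Rightarrow> (nat \<Rightarrow> nat) \<Rightarrow> nat \<Rightarrow> nat" where
  "levels_upto k m i = (if i \<le> k then m i else 0)"

definition levels_above :: "nat \<Rightarrow> (nat \<Rightarrow> nat) \<Rightarrow> nat \<Rightarrow> nat" where
  "levels_above k m j = (if j = 0 then 0 else m (j + k))"

lemma levels_upto_above_eqI:
  assumes "levels_upto k m = levels_upto k m'" "levels_above k m = levels_above k m'"
  shows "m = m'"
proof
  fix i
  show "m i = m' i"
  proof (cases "i \<le> k")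
    case True
    then show ?thesis using fun_cong[OF assms(1), of i] by (simp add: levels_upto_def)
  next
    case False
    then show ?thesis using fun_cong[OF assms(2), of "i - k"] by (simp add: levels_above_def)
  qed
qed

lemma level_count_lower:
  assumes "\<forall>v\<in>I. f v \<le> k" "\<forall>v\<in>V - I. k < f v" "I \<subseteq> V"
  shows "level_count I f = levels_upto k (level_count V f)"
proof
  fix i
  have "v \<in> I \<longleftrightarrow> f v \<le> k" if "v \<in> V" for v
    using assms that by (meson DiffI not_less)
  then have "{v \<in> I. f v = i} = (if i \<le> k then {v \<in> V. f v = i} else {})"
    using assms(1,3) by auto
  then show "level_count I f i = levels_upto k (level_count V f) i"
    unfolding level_count_def levels_upto_def by simp
qed

lemma level_count_upper:
  fixes f :: "'a \<Rightarrow> nat"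
  assumes "\<forall>v\<in>I. f v \<le> k" "\<forall>v\<in>V - I. k < f v"
  shows "level_count (V - I) (\<lambda>v. f v - k) = levels_above k (level_count V f)"
proof
  fix j
  have "{v \<in> V - I. f v - k = j} = (if j = 0 then {} else {v \<in> V. f v = j + k})"
    using assms by force
  then show "level_count (V - I) (\<lambda>v. f v - k) j = levels_above k (level_count V f) j"
    unfolding level_count_def levels_above_def by simp
qed

lemma level_count_split_iff:
  fixes f :: "'a \<Rightarrow> nat"
  assumes "\<forall>v\<in>I. f v \<le> k" "\<forall>v\<in>V - I. k < f v" "I \<subseteq> V"
  shows "level_count V f = m \<longleftrightarrow>
    level_count I f = levels_upto k m \<and> level_count (V - I) (\<lambda>v. f v - k) = levels_above k m"
  unfolding level_count_lower[OF assms] level_count_upper[OF assms(1,2)]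
  using levels_upto_above_eqI by blast

lemma PiE_split_shift_iff:
  fixes f :: "'a \<Rightarrow> nat"
  assumes f: "f \<in> extensional V" and I: "I \<subseteq> V" and high: "\<forall>v\<in>V - I. k < f v"
  shows "f \<in> V \<rightarrow>\<^sub>E {1..} \<longleftrightarrow>
    restrict f I \<in> I \<rightarrow>\<^sub>E {1..} \<and> restrict (\<lambda>v. f v - k) (V - I) \<in> (V - I) \<rightarrow>\<^sub>E {1..}"
proof -
  have pos: "1 \<le> f v \<and> 1 \<le> f v - k" if "v \<in> V - I" for v
  proof -
    have "k < f v" using high that by blast
    then show ?thesis by simp
  qed
  then have "f \<in> V \<rightarrow>\<^sub>E {1..} \<longleftrightarrow> (\<forall>v\<in>I. 1 \<le> f v)" using f I by (auto simp: PiE_iff)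
  moreover have "restrict (\<lambda>v. f v - k) (V - I) \<in> (V - I) \<rightarrow>\<^sub>E {1..}"
    using pos by (simp add: restrict_PiE_iff)
  ultimately show ?thesis by (simp add: restrict_PiE_iff Pi_iff)
qed

lemma generic_fns_level_split_iff:
  fixes k :: nat
  assumes V: "finite V" and B: "B \<subseteq> Pow V" and I: "I \<subseteq> V"
    and f: "f \<in> extensional V" and high: "\<forall>v\<in>V - I. k < f v"
  shows "f \<in> generic_fns V B m \<and> {v \<in> V. f v \<le> k} = I \<longleftrightarrow>
    restrict f I \<in> generic_fns I (restr B I) (levels_upto k m) \<and>
    restrict (\<lambda>v. f v - k) (V - I) \<in> generic_fns (V - I) (contr V B I) (levels_above k m)"
    (is "?lhs \<longleftrightarrow> ?rhs")
proof -
  have level_set_iff: "{v \<in> V. f v \<le> k} = I \<longleftrightarrow> (\<forall>v\<in>I. f v \<le> k)"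
    using I high by (auto simp: not_less[symmetric])
  have rhs_low: "\<forall>v\<in>I. f v \<le> k" if ?rhs
  proof
    fix v assume v: "v \<in> I"
    have "levels_upto k m (restrict f I v) \<noteq> 0"
      using generic_fns_value[OF finite_subset[OF I V] _ v] that by blast
    then show "f v \<le> k" using v by (simp add: levels_upto_def split: if_splits)
  qed
  have "?lhs \<longleftrightarrow> ?rhs" if low: "\<forall>v\<in>I. f v \<le> k"
  proof -
    have "unique_max_on B f \<longleftrightarrow> unique_max_on (restr B I) (restrict f I) \<and>
        unique_max_on (contr V B I) (restrict (\<lambda>v. f v - k) (V - I))"
      unfolding unique_max_on_split_iff[OF B low high]
      by (intro conj_cong unique_max_on_cong) (auto simp: restr_def contr_def)
    then show ?thesis
      using PiE_split_shift_iff[OF f I high] level_count_split_iff[OF low high I]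
      unfolding generic_fns_def mem_Collect_eq level_set_iff level_count_restrict using low by blast
  qed
  then show ?thesis using rhs_low level_set_iff by blast
qed

lemma card_generic_fns_level_fibre:
  fixes k :: nat
  assumes V: "finite V" and B: "B \<subseteq> Pow V" and I: "I \<subseteq> V"
  shows "card {f \<in> generic_fns V B m. {v \<in> V. f v \<le> k} = I} =
    card (generic_fns I (restr B I) (levels_upto k m)) *
    card (generic_fns (V - I) (contr V B I) (levels_above k m))"
proof (rule card_Collect_split_shift[OF I])
  show "f \<in> extensional V \<and> (\<forall>v\<in>V - I. k < f v)"
    if "f \<in> generic_fns V B m \<and> {v \<in> V. f v \<le> k} = I" for f
    using that by (auto simp: generic_fns_def PiE_iff)
  show "f \<in> generic_fns V B m \<and> {v \<in> V. f v \<le> k} = I \<longleftrightarrow>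
      restrict f I \<in> generic_fns I (restr B I) (levels_upto k m) \<and>
      restrict (\<lambda>v. f v - k) (V - I) \<in> generic_fns (V - I) (contr V B I) (levels_above k m)"
    if "f \<in> extensional V" "\<forall>v\<in>V - I. k < f v" for f
    by (rule generic_fns_level_split_iff[OF V B I that])
qed (auto simp: generic_fns_def PiE_iff Suc_le_eq)

definition comp_monomial :: "nat list \<Rightarrow> nat \<Rightarrow> nat" where
  "comp_monomial \<alpha> = (\<lambda>i. if 1 \<le> i \<and> i \<le> length \<alpha> then \<alpha> ! (i - 1) else 0)"

lemma Mcoef_eq: "Mcoef F \<alpha> = F (comp_monomial \<alpha>)"
  unfolding Mcoef_def comp_monomial_def ..

lemma levels_upto_comp_monomial_append:
  "levels_upto (length \<beta>) (comp_monomial (\<beta> @ \<gamma>)) = comp_monomial \<beta>"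
  by (auto simp: fun_eq_iff levels_upto_def comp_monomial_def nth_append)

lemma levels_above_comp_monomial_append:
  "levels_above (length \<beta>) (comp_monomial (\<beta> @ \<gamma>)) = comp_monomial \<gamma>"
  by (auto simp: fun_eq_iff levels_above_def comp_monomial_def nth_append)

lemma Mcoef_FB_append:
  assumes V: "finite V" and B: "B \<subseteq> Pow V - {{}}"
  shows "Mcoef (FB V B) (\<beta> @ \<gamma>) =
    (\<Sum>I\<in>Pow V. Mcoef (FB I (restr B I)) \<beta> * Mcoef (FB (V - I) (contr V B I)) \<gamma>)"
proof -
  let ?G = "generic_fns V B (comp_monomial (\<beta> @ \<gamma>))"
  have BP: "B \<subseteq> Pow V" using B by blast
  have "Mcoef (FB V B) (\<beta> @ \<gamma>) = card ?G"
    unfolding Mcoef_eq FB_eq_card_generic_fns[OF V B] ..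
  also have "\<dots> = (\<Sum>I\<in>Pow V. card {f \<in> ?G. {v \<in> V. f v \<le> length \<beta>} = I})"
    using V by (intro card_eq_sum_card_fibres finite_generic_fns) auto
  also have "\<dots> = (\<Sum>I\<in>Pow V. card (generic_fns I (restr B I) (comp_monomial \<beta>)) *
      card (generic_fns (V - I) (contr V B I) (comp_monomial \<gamma>)))"
    by (intro sum.cong refl)
      (simp add: card_generic_fns_level_fibre[OF V BP] levels_upto_comp_monomial_append
        levels_above_comp_monomial_append)
  also have "\<dots> = (\<Sum>I\<in>Pow V. Mcoef (FB I (restr B I)) \<beta> * Mcoef (FB (V - I) (contr V B I)) \<gamma>)"
  proof (intro sum.cong refl)
    fix I assume I: "I \<in> Pow V"
    have "restr B I \<subseteq> Pow I - {{}}" using B unfolding restr_def by blast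
    moreover have "contr V B I \<subseteq> Pow (V - I) - {{}}" unfolding contr_def by blast
    ultimately show "card (generic_fns I (restr B I) (comp_monomial \<beta>)) *
        card (generic_fns (V - I) (contr V B I) (comp_monomial \<gamma>)) =
        Mcoef (FB I (restr B I)) \<beta> * Mcoef (FB (V - I) (contr V B I)) \<gamma>"
      using I V unfolding Mcoef_eq by (simp add: FB_eq_card_generic_fns finite_subset)
  qed
  finally show ?thesis .
qed

theorem mainTheorem4:
  shows "(\<forall>m. FB ({}::'a set) {} m = (if (\<forall>i. m i = 0) then 1 else 0)) \<and>
    (\<forall>(V::'a set) B. finite V \<and> building_set V B \<longrightarrow>
        quasisymmetric (FB V B) \<and>
        homogeneous (card V) (FB V B) \<and>
        zetaQ (card V) (FB V B) = (if discrete_bs V B then 1 else 0) \<and>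
        (\<forall>\<beta> \<gamma>. composition \<beta> \<and> composition \<gamma> \<longrightarrow>
            Mcoef (FB V B) (\<beta> @ \<gamma>) =
              (\<Sum>I\<in>Pow V. Mcoef (FB I (restr B I)) \<beta> * Mcoef (FB (V - I) (contr V B I)) \<gamma>))) \<and>
    (\<forall>(V1::'a set) V2 B1 B2. finite V1 \<and> finite V2 \<and> V1 \<inter> V2 = {} \<and>
        building_set V1 B1 \<and> building_set V2 B2 \<longrightarrow>
        (\<forall>m. fin_supp m \<longrightarrow>
           FB (V1 \<union> V2) (B1 \<union> B2) m = ps_mult (FB V1 B1) (FB V2 B2) m))"
proof (intro conjI allI impI)
  show "FB ({}::'a set) {} m = (if \<forall>i. m i = 0 then 1 else 0)" for m
    by (simp add: FB_eq_card_generic_fns generic_fns_empty fun_eq_iff)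
next
  fix V :: "'a set" and B assume "finite V \<and> building_set V B"
  then have V: "finite V" and B: "building_set V B" "B \<subseteq> Pow V - {{}}"
    using building_set_subset_Pow by auto
  show "quasisymmetric (FB V B)" by (rule quasisymmetric_FB[OF V B(2)])
  show "homogeneous (card V) (FB V B)" by (rule homogeneous_card[OF V B(2)])
  show "zetaQ (card V) (FB V B) = (if discrete_bs V B then 1 else 0)" by (rule zetaQ_FB[OF V B(1)])
  \<comment> \<open>the coproduct formula holds for all lists\<close>
  show "Mcoef (FB V B) (\<beta> @ \<gamma>) =
      (\<Sum>I\<in>Pow V. Mcoef (FB I (restr B I)) \<beta> * Mcoef (FB (V - I) (contr V B I)) \<gamma>)" for \<beta> \<gamma>
    by (rule Mcoef_FB_append[OF V B(2)])
next
  fix V1 V2 :: "'a set" and B1 B2 m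
  assume "finite V1 \<and> finite V2 \<and> V1 \<inter> V2 = {} \<and> building_set V1 B1 \<and> building_set V2 B2"
    and m: "fin_supp m"
  then show "FB (V1 \<union> V2) (B1 \<union> B2) m = ps_mult (FB V1 B1) (FB V2 B2) m"
    by (intro FB_Un[OF _ _ _ building_set_subset_Pow building_set_subset_Pow m]) simp_all
qed

end
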